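(* Let $m\ge 1$ and consider the labeled chip-firing process on $\mathbb{Z}$ starting with $2m$ chips labeled $-m,\dots,-1,1,\dots,m$ at site $0$. When the process terminates (i.e. a configuration is reached in which no firing move is possible), each chip $k$ is at position $k$, regardless of the choices of firing moves made.
   Context: Labeled chip-firing on the infinite path graph $\mathbb{Z}$ (each integer $i$ adjacent to $i-1$ and $i+1$): a firing move consists of choosing two chips with labels $a<b$ located at a common site $i$, and moving chip $a$ to site $i-1$ and chip $b$ to site $i+1$. The process terminates when all chips occupy distinct sites. *)

theory Defs
  imports Main
begin

definition chips :: "nat \<Rightarrow> int set" where
  "chips m = {k. - int m \<le> k \<and> k \<le> int m \<and> k \<noteq> 0}"

text \<open>A configuration assigns a site in Z to each chip label (values at
non-labels are irrelevant). A firing move: two chips a < b at a common site i;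
chip a moves to i-1 and chip b moves to i+1.\<close>
inductive fire :: "int set \<Rightarrow> (int \<Rightarrow> int) \<Rightarrow> (int \<Rightarrow> int) \<Rightarrow> bool" for L where
  "a \<in> L \<Longrightarrow> b \<in> L \<Longrightarrow> a < b \<Longrightarrow> c a = c b \<Longrightarrow>
     fire L c (c(a := c a - 1, b := c b + 1))"

definition terminal :: "int set \<Rightarrow> (int \<Rightarrow> int) \<Rightarrow> bool" where
  "terminal L c \<longleftrightarrow> inj_on c L"

end

theory Submission
  imports Defs "HOL-Library.Multiset" "HOL-Library.Confluence"
begin

(*
  Forgetting labels, a firing becomes a toppling of the multiset of occupied sites. Toppling is
  strongly confluent, and a chip added at y to a stable configuration whose occupied run around y
  is L+1..R-1 avalanches to L and R while vacating L+R-y; hence every finite multiset has a unique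
  reachable stable configuration, its stabilization.

  For a label k > 0, the stabilization of all chips other than k has at most m - k sites >= k.
  Initially these 2m-1 chips sit at 0 and stabilize to -(m-1)..m-1. A firing not involving k
  topples the other chips and leaves their stabilization unchanged. If k fires with a partner
  b > k, then among the others b steps right, which moves one stabilized site from q-1 to q; the
  bound for b covers the sites >= b, the sites k..b-1 add at most b - k, one fewer if site k is
  empty, and the moved site lands on k only if k was empty. If k fires with a partner a < k, then
  a steps left, which cannot increase the count.

  A terminal c is injective, so its multiset of sites is stable and, being reachable from 2m chips
  at 0, equals their stabilization, which is the label set itself: c permutes the labels. The bound
  for k then forces c k >= k, by the symmetry k -> -k also c k <= k for k < 0, and a permutation of
  the labels that never decreases |k| must fix |k|.
*)

definition topple :: "int multiset \<Rightarrow> int \<Rightarrow> int multiset" where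
  "topple M z = M - {#z, z#} + {#z - 1, z + 1#}"

definition topples :: "int multiset \<Rightarrow> int multiset \<Rightarrow> bool" where
  "topples M M' \<longleftrightarrow> (\<exists>z. 2 \<le> count M z \<and> M' = topple M z)"

definition stable_config :: "int multiset \<Rightarrow> bool" where
  "stable_config M \<longleftrightarrow> (\<forall>z. count M z \<le> 1)"

lemma count_topple:
  assumes "2 \<le> count M z"
  shows "count (topple M z) w = count M w - (if w = z then 2 else 0)
           + (if w = z - 1 then 1 else 0) + (if w = z + 1 then 1 else 0)"
  using assms by (auto simp: topple_def)

lemma count_stable_config: "stable_config E \<Longrightarrow> count E t = (if t \<in># E then 1 else 0)"
  unfolding stable_config_def by (metis count_greater_zero_iff le_antisym less_one not_le not_in_iff)

lemma stable_config_mset_set: "stable_config (mset_set A)"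
  by (simp add: stable_config_def count_mset_set')

lemma stable_config_diff: "stable_config E \<Longrightarrow> stable_config (E - A)"
  unfolding stable_config_def by (metis count_diff diff_le_self order_trans)

lemma stable_config_add_mset: "stable_config E \<Longrightarrow> x \<notin># E \<Longrightarrow> stable_config (add_mset x E)"
  unfolding stable_config_def by (simp add: not_in_iff)

lemma topple_commute:
  assumes "2 \<le> count M y" "2 \<le> count M z" "y \<noteq> z"
  shows "2 \<le> count (topple M y) z" and "topple (topple M y) z = topple (topple M z) y"
proof -
  show "2 \<le> count (topple M y) z"
    using assms by (simp add: count_topple)
  moreover have "2 \<le> count (topple M z) y"
    using assms by (simp add: count_topple)
  ultimately show "topple (topple M y) z = topple (topple M z) y"
    using assms by (intro multiset_eqI) (auto simp: count_topple)
qed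

lemma strong_confluentp_topples: "strong_confluentp topples"
proof
  fix M M1 M2
  assume "topples M M1" "topples M M2"
  then obtain y z where y: "2 \<le> count M y" "M1 = topple M y"
    and z: "2 \<le> count M z" "M2 = topple M z"
    unfolding topples_def by blast
  show "\<exists>M'. topples\<^sup>*\<^sup>* M1 M' \<and> topples\<^sup>=\<^sup>= M2 M'"
  proof (cases "y = z")
    case True
    with y z show ?thesis by auto
  next
    case False
    then have "topples M1 (topple M1 z)" "topples M2 (topple M1 z)"
      using topple_commute[OF y(1) z(1)] topple_commute[OF z(1) y(1)] y z
      unfolding topples_def by auto
    then show ?thesis by auto
  qed
qed

lemma stable_not_topples: "stable_config M \<Longrightarrow> \<not> topples M M'"
proof
  assume "stable_config M" "topples M M'"
  then obtain z where "count M z \<le> 1" "2 \<le> count M z"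
    unfolding stable_config_def topples_def by blast
  then show False
    by linarith
qed

lemma rtranclp_topples_from_stable: "topples\<^sup>*\<^sup>* M M' \<Longrightarrow> stable_config M \<Longrightarrow> M' = M"
  by (induction rule: converse_rtranclp_induct) (auto dest: stable_not_topples)

lemma stable_config_reachable_unique:
  assumes "topples\<^sup>*\<^sup>* M B1" "stable_config B1" "topples\<^sup>*\<^sup>* M B2" "stable_config B2"
  shows "B1 = B2"
proof -
  obtain B where "topples\<^sup>*\<^sup>* B1 B" "topples\<^sup>*\<^sup>* B2 B"
    using strong_confluentp_imp_confluentp[OF strong_confluentp_topples] assms(1,3)
    by (blast dest: confluentpD)
  with assms(2,4) show ?thesis
    by (metis rtranclp_topples_from_stable)
qed

lemma topples_add_mset: "topples M M' \<Longrightarrow> topples (add_mset y M) (add_mset y M')"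
proof -
  assume "topples M M'"
  then obtain z where z: "2 \<le> count M z" "M' = topple M z"
    unfolding topples_def by blast
  then have z': "2 \<le> count (add_mset y M) z"
    by (metis count_add_mset le_SucI)
  have "topple (add_mset y M) z = add_mset y (topple M z)"
    using z(1) by (intro multiset_eqI) (auto simp: count_topple[OF z(1)] count_topple[OF z'])
  with z z' show ?thesis
    unfolding topples_def by metis
qed

lemma topples_add_mset_occupied:
  assumes "y \<in># E"
  shows "topples (add_mset y E) (add_mset (y - 1) (add_mset (y + 1) (E - {#y#})))"
proof -
  have "2 \<le> count (add_mset y E) y"
    using assms by (simp add: Suc_le_eq)
  moreover have "topple (add_mset y E) y = add_mset (y - 1) (add_mset (y + 1) (E - {#y#}))"
    using assms by (simp add: topple_def)
  ultimately show ?thesis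
    unfolding topples_def by metis
qed

lemma rtranclp_topples_add_mset:
  "topples\<^sup>*\<^sup>* M M' \<Longrightarrow> topples\<^sup>*\<^sup>* (add_mset y M) (add_mset y M')"
  by (induction rule: rtranclp_induct) (auto intro: topples_add_mset rtranclp.rtrancl_into_rtrancl)

lemma ex_hole_below:
  fixes S :: "int set"
  assumes "finite S"
  obtains L where "L \<le> a" "L \<notin> S" "{L<..a} \<subseteq> S"
proof -
  define D where "D = {Min (insert a S) - 1..a} - S"
  have "Min (insert a S) \<le> t" if "t \<in> insert a S" for t
    using assms that by simp
  then have "Min (insert a S) - 1 \<in> D"
    by (force simp: D_def)
  moreover have "finite D"
    by (simp add: D_def)
  ultimately have "Max D \<in> D" and max: "\<And>t. t \<in> D \<Longrightarrow> t \<le> Max D"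
    by (auto intro: Max_in)
  moreover have "{Max D<..a} \<subseteq> S"
  proof
    fix t assume t: "t \<in> {Max D<..a}"
    show "t \<in> S"
    proof (rule ccontr)
      assume "t \<notin> S"
      moreover have "Min (insert a S) - 1 \<le> t"
        using max[OF \<open>Min (insert a S) - 1 \<in> D\<close>] t by simp
      ultimately have "t \<in> D"
        using t by (simp add: D_def)
      with max t show False
        by fastforce
    qed
  qed
  with \<open>Max D \<in> D\<close> show thesis
    by (intro that[of "Max D"]) (auto simp: D_def)
qed

lemma ex_hole_above:
  fixes S :: "int set"
  assumes "finite S"
  obtains R where "b \<le> R" "R \<notin> S" "{b..<R} \<subseteq> S"
proof -
  define D where "D = {b..Max (insert b S) + 1} - S"
  have "t \<le> Max (insert b S)" if "t \<in> insert b S" for t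
    using assms that by simp
  then have "Max (insert b S) + 1 \<in> D"
    by (force simp: D_def)
  moreover have "finite D"
    by (simp add: D_def)
  ultimately have "Min D \<in> D" and min: "\<And>t. t \<in> D \<Longrightarrow> Min D \<le> t"
    by (auto intro: Min_in)
  moreover have "{b..<Min D} \<subseteq> S"
  proof
    fix t assume t: "t \<in> {b..<Min D}"
    show "t \<in> S"
    proof (rule ccontr)
      assume "t \<notin> S"
      moreover have "t \<le> Max (insert b S) + 1"
        using min[OF \<open>Max (insert b S) + 1 \<in> D\<close>] t by simp
      ultimately have "t \<in> D"
        using t by (simp add: D_def)
      with min t show False
        by fastforce
    qed
  qed
  with \<open>Min D \<in> D\<close> show thesis
    by (intro that[of "Min D"]) (auto simp: D_def)
qed

lemma ex_hole_bracket:
  fixes S :: "int set"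
  assumes "finite S" "b \<le> a + 1"
  obtains L R where "L \<le> a" "b \<le> R" "L \<notin> S" "R \<notin> S" "{L<..<R} \<subseteq> S"
proof -
  obtain L where L: "L \<le> a" "L \<notin> S" "{L<..a} \<subseteq> S"
    using ex_hole_below[OF assms(1)] .
  obtain R where R: "b \<le> R" "R \<notin> S" "{b..<R} \<subseteq> S"
    using ex_hole_above[OF assms(1)] .
  have "{L<..<R} \<subseteq> {L<..a} \<union> {b..<R}"
    using assms(2) by auto
  with L R show thesis
    by (intro that[of L R]) auto
qed

lemma stable_config_add_chip:
  assumes "stable_config E" "L \<le> y" "y \<le> R" "L \<notin># E" "R \<notin># E" "{L<..<R} \<subseteq> set_mset E"
  shows "stable_config (E + {#L, R#} - {#L + R - y#})"
  using assms unfolding stable_config_def by (auto simp: not_in_iff)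

(* The hypotheses allow y = L or y = R, even L = y = R: a chip added to an empty site stays there,
   which the formula gets right because the subtraction is performed last. *)
lemma topples_add_chip:
  assumes "stable_config E" "L \<le> y" "y \<le> R" "L \<notin># E" "R \<notin># E" "{L<..<R} \<subseteq> set_mset E"
  shows "topples\<^sup>*\<^sup>* (add_mset y E) (E + {#L, R#} - {#L + R - y#})"
  using assms
proof (induction "nat (R - L)" arbitrary: E L y R rule: less_induct)
  case less
  note count_E = count_stable_config[OF less.prems(1)]
  have inside: "t \<in># E" if "L < t" "t < R" for t
    using less.prems(6) that by auto
  consider "y = L" | "y = R" | "L < y" "y < R"
    using less.prems(2,3) by linarith
  then show ?case
  proof cases
    case 1
    then show ?thesis by (simp add: add_mset_commute[of L R])
  next
    case 2
    then show ?thesis by simp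
  next
    case 3
    \<comment> \<open>Topple \<open>y\<close>; the chip sent to \<open>y + 1\<close> avalanches inside \<open>y..R\<close>, filling \<open>R\<close> and vacating \<open>R - 1\<close>,
      and then the chip at \<open>y - 1\<close> avalanches inside \<open>L..R - 1\<close>.\<close>
    define E0 where "E0 = E - {#y#}"
    define B where "B = add_mset R (E - {#R - 1#})"
    have y: "y \<in># E" and R1: "R - 1 \<in># E"
      using inside 3 by auto
    have "topples\<^sup>*\<^sup>* (add_mset y E) (add_mset (y - 1) (add_mset (y + 1) E0))"
      using topples_add_mset_occupied[OF y] unfolding E0_def by simp
    also have "topples\<^sup>*\<^sup>* \<dots> (add_mset (y - 1) B)"
    proof (rule rtranclp_topples_add_mset)
      have "stable_config E0"
        unfolding E0_def using less.prems(1) by (rule stable_config_diff)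
      moreover have "y \<notin># E0" "R \<notin># E0" "{y<..<R} \<subseteq> set_mset E0"
        using y inside 3 less.prems(5) by (auto simp: E0_def in_diff_count count_E)
      moreover have "E0 + {#y, R#} - {#y + R - (y + 1)#} = B"
        using y R1 by (simp add: E0_def B_def add_mset_commute[of y R])
      ultimately show "topples\<^sup>*\<^sup>* (add_mset (y + 1) E0) B"
        using less.hyps[of R y E0 "y + 1"] 3 by auto
    qed
    also have "topples\<^sup>*\<^sup>* \<dots> (B + {#L, R - 1#} - {#L + (R - 1) - (y - 1)#})"
    proof -
      have "stable_config B"
        unfolding B_def using less.prems(1,5)
        by (blast intro: stable_config_add_mset stable_config_diff dest: in_diffD)
      moreover have "L \<notin># B" "R - 1 \<notin># B" "{L<..<R - 1} \<subseteq> set_mset B"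
        using inside 3 less.prems(4) by (auto simp: B_def in_diff_count count_E)
      ultimately show ?thesis
        using less.hyps[of "R - 1" L B "y - 1"] 3 by auto
    qed
    also have "B + {#L, R - 1#} - {#L + (R - 1) - (y - 1)#} = E + {#L, R#} - {#L + R - y#}"
      using R1 by (simp add: B_def add_mset_commute[of "R - 1" R] add_diff_eq)
    finally show ?thesis .
  qed
qed

lemma ex_stable_config_reachable: "\<exists>B. topples\<^sup>*\<^sup>* M B \<and> stable_config B"
proof (induction M)
  case empty
  show ?case
    by (auto simp: stable_config_def)
next
  case (add y M)
  then obtain E where E: "topples\<^sup>*\<^sup>* M E" "stable_config E"
    by blast
  obtain L R where LR: "L \<le> y" "y \<le> R" "L \<notin># E" "R \<notin># E" "{L<..<R} \<subseteq> set_mset E"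
    using ex_hole_bracket[where a = y and b = y] by auto
  have "topples\<^sup>*\<^sup>* (add_mset y M) (add_mset y E)"
    using E(1) by (rule rtranclp_topples_add_mset)
  also have "topples\<^sup>*\<^sup>* \<dots> (E + {#L, R#} - {#L + R - y#})"
    using E(2) LR by (rule topples_add_chip)
  finally show ?case
    using stable_config_add_chip[OF E(2) LR] by blast
qed

definition stabilization :: "int multiset \<Rightarrow> int multiset" where
  "stabilization M = (THE B. topples\<^sup>*\<^sup>* M B \<and> stable_config B)"

lemma stabilization_eqI: "topples\<^sup>*\<^sup>* M B \<Longrightarrow> stable_config B \<Longrightarrow> stabilization M = B"
  unfolding stabilization_def by (blast intro: the_equality stable_config_reachable_unique)

lemma rtranclp_topples_stabilization: "topples\<^sup>*\<^sup>* M (stabilization M)"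
  and stable_stabilization: "stable_config (stabilization M)"
proof -
  obtain B where "topples\<^sup>*\<^sup>* M B" "stable_config B"
    using ex_stable_config_reachable by blast
  moreover from this have "stabilization M = B"
    by (rule stabilization_eqI)
  ultimately show "topples\<^sup>*\<^sup>* M (stabilization M)" "stable_config (stabilization M)"
    by simp_all
qed

lemma stabilization_stable: "stable_config M \<Longrightarrow> stabilization M = M"
  by (simp add: stabilization_eqI)

lemma stabilization_rtranclp_topples: "topples\<^sup>*\<^sup>* M M' \<Longrightarrow> stabilization M' = stabilization M"
  by (metis rtranclp_topples_stabilization stable_stabilization stabilization_eqI rtranclp_trans)

lemma stabilization_add_mset:
  "stabilization (add_mset y M) = stabilization (add_mset y (stabilization M))"
  by (rule stabilization_rtranclp_topples
      [OF rtranclp_topples_add_mset[OF rtranclp_topples_stabilization], symmetric])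

lemma stabilization_add_chip:
  assumes "stable_config E" "L \<le> y" "y \<le> R" "L \<notin># E" "R \<notin># E" "{L<..<R} \<subseteq> set_mset E"
  shows "stabilization (add_mset y E) = E + {#L, R#} - {#L + R - y#}"
  using topples_add_chip[OF assms] stable_config_add_chip[OF assms] by (rule stabilization_eqI)

definition shift_right :: "int set \<Rightarrow> int set \<Rightarrow> bool" where
  "shift_right T T' \<longleftrightarrow> (\<exists>q D. T = insert (q - 1) D \<and> T' = insert q D \<and> q - 1 \<notin> D \<and> q \<notin> D)"

lemma shift_right_stabilization_add_mset:
  "shift_right (set_mset (stabilization (add_mset z N))) (set_mset (stabilization (add_mset (z + 1) N)))"
proof -
  define E where "E = stabilization N"
  have E: "stable_config E"
    unfolding E_def by (rule stable_stabilization)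
  \<comment> \<open>One bracket serves both \<open>z\<close> and \<open>z + 1\<close>, so the two stabilizations differ only in the vacated site.\<close>
  obtain L R where LR: "L \<le> z" "z + 1 \<le> R" "L \<notin># E" "R \<notin># E" "{L<..<R} \<subseteq> set_mset E"
    using ex_hole_bracket[where a = z and b = "z + 1"] by auto
  define F where "F = E + {#L, R#}"
  define q where "q = L + R - z"
  have one: "count F t = 1" if "L \<le> t" "t \<le> R" for t
    using LR that by (cases "L < t \<and> t < R") (auto simp: F_def count_stable_config[OF E])
  have "stabilization (add_mset z N) = stabilization (add_mset z E)"
    unfolding E_def by (rule stabilization_add_mset)
  also have "\<dots> = F - {#q#}"
    using stabilization_add_chip[OF E, of L z R] LR unfolding F_def q_def by simp
  finally have before: "stabilization (add_mset z N) = F - {#q#}" .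
  have "stabilization (add_mset (z + 1) N) = stabilization (add_mset (z + 1) E)"
    unfolding E_def by (rule stabilization_add_mset)
  also have "\<dots> = F - {#q - 1#}"
    using stabilization_add_chip[OF E, of L "z + 1" R] LR unfolding F_def q_def
    by (simp add: diff_diff_eq)
  finally have after: "stabilization (add_mset (z + 1) N) = F - {#q - 1#}" .
  have remove: "set_mset (F - {#p#}) = set_mset F - {p}" if "L \<le> p" "p \<le> R" for p
    using one[OF that] by (intro at_most_one_mset_mset_diff) (simp add: in_diff_count)
  have "q - 1 \<in># F" "q \<in># F"
    using one[of "q - 1"] one[of q] LR unfolding q_def by (auto intro: count_inI)
  then show ?thesis
    unfolding shift_right_def using LR
    by (intro exI[of _ q] exI[of _ "set_mset F - {q - 1, q}"]) (auto simp: before after remove q_def)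
qed

lemma stabilization_add_zero_interval:
  "stabilization (add_mset 0 (mset_set {-int n..int n})) = mset_set ({-int (Suc n)..int (Suc n)} - {0})"
proof -
  have "stabilization (add_mset 0 (mset_set {-int n..int n}))
      = mset_set {-int n..int n} + {#-int n - 1, int n + 1#} - {#(-int n - 1) + (int n + 1) - 0#}"
    by (rule stabilization_add_chip) (auto simp: stable_config_mset_set)
  also have "\<dots> = mset_set ({-int (Suc n)..int (Suc n)} - {0})"
    by (rule multiset_eqI) (simp add: count_mset_set')
  finally show ?thesis .
qed

lemma stabilization_zeros_odd:
  "stabilization (replicate_mset (2 * n + 1) 0) = mset_set {-int n..int n}"
proof (induction n)
  case 0
  show ?case
    by (simp add: stabilization_stable stable_config_def)
next
  case (Suc n)
  have "stabilization (replicate_mset (2 * Suc n + 1) 0)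
      = stabilization (add_mset 0 (add_mset 0 (replicate_mset (2 * n + 1) 0)))"
    by simp
  also have "\<dots> = stabilization (add_mset 0 (stabilization (add_mset 0 (mset_set {-int n..int n}))))"
    by (metis Suc.IH stabilization_add_mset)
  also have "\<dots> = stabilization (add_mset 0 (mset_set ({-int (Suc n)..int (Suc n)} - {0})))"
    by (simp only: stabilization_add_zero_interval)
  also have "add_mset 0 (mset_set ({-int (Suc n)..int (Suc n)} - {0})) = mset_set {-int (Suc n)..int (Suc n)}"
    by (rule multiset_eqI) (simp add: count_mset_set')
  also have "stabilization (mset_set {-int (Suc n)..int (Suc n)}) = mset_set {-int (Suc n)..int (Suc n)}"
    by (rule stabilization_stable[OF stable_config_mset_set])
  finally show ?case .
qed

lemma stabilization_zeros_even:
  "stabilization (replicate_mset (2 * n) 0) = mset_set ({-int n..int n} - {0})"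
proof (cases n)
  case 0
  then show ?thesis
    by (simp add: stabilization_stable stable_config_def)
next
  case (Suc n')
  have "stabilization (replicate_mset (2 * n) 0) = stabilization (add_mset 0 (replicate_mset (2 * n' + 1) 0))"
    using Suc by simp
  also have "\<dots> = stabilization (add_mset 0 (mset_set {-int n'..int n'}))"
    by (metis stabilization_zeros_odd stabilization_add_mset)
  also have "\<dots> = mset_set ({-int n..int n} - {0})"
    using Suc by (simp add: stabilization_add_zero_interval)
  finally show ?thesis .
qed

lemma card_ge_insert_succ:
  fixes D :: "int set"
  assumes "finite D" "q - 1 \<notin> D" "q \<notin> D"
  shows "card {y \<in> insert q D. a \<le> y} = card {y \<in> insert (q - 1) D. a \<le> y} + (if q = a then 1 else 0)"
proof -
  have split: "{y \<in> insert p D. a \<le> y} = (if a \<le> p then insert p {y \<in> D. a \<le> y} else {y \<in> D. a \<le> y})"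
    for p by auto
  have "card (insert p {y \<in> D. a \<le> y}) = Suc (card {y \<in> D. a \<le> y})" if "p \<notin> D" for p
    using assms(1) that by simp
  with assms(2,3) show ?thesis
    unfolding split by auto
qed

lemma card_ge_le_card_ge_add:
  fixes S :: "int set"
  assumes "finite S" "a < b"
  shows "int (card {y \<in> S. a \<le> y}) + (if a \<in> S then 0 else 1) \<le> int (card {y \<in> S. b \<le> y}) + (b - a)"
proof -
  have "{y \<in> S. a \<le> y} = {y \<in> S. b \<le> y} \<union> {y \<in> S. a \<le> y \<and> y < b}"
    using assms(2) by auto
  then have "card {y \<in> S. a \<le> y} = card {y \<in> S. b \<le> y} + card {y \<in> S. a \<le> y \<and> y < b}"
    using assms(1) by (simp add: card_Un_disjoint disjoint_iff)
  moreover have "int (card {y \<in> S. a \<le> y \<and> y < b}) + (if a \<in> S then 0 else 1) \<le> b - a"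
  proof (cases "a \<in> S")
    case True
    have "card {y \<in> S. a \<le> y \<and> y < b} \<le> card {a..<b}"
      by (intro card_mono) auto
    with True assms(2) show ?thesis
      by (simp add: le_nat_iff)
  next
    case False
    then have "card {y \<in> S. a \<le> y \<and> y < b} \<le> card {a<..<b}"
      by (intro card_mono) (auto simp: order_le_less)
    with False assms(2) show ?thesis
      by simp
  qed
  ultimately show ?thesis
    by simp
qed

lemma card_ge_shift_right:
  assumes "finite T" "shift_right T T'"
  shows "card {y \<in> T. a \<le> y} \<le> card {y \<in> T'. a \<le> y}"
    and "card {y \<in> T'. a \<le> y} \<le> card {y \<in> T. a \<le> y} + (if a \<in> T then 0 else 1)"
proof -
  obtain q D where qD: "T = insert (q - 1) D" "T' = insert q D" "q - 1 \<notin> D" "q \<notin> D"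
    using assms(2) unfolding shift_right_def by blast
  moreover have "finite D"
    using assms(1) qD(1) by simp
  ultimately show "card {y \<in> T. a \<le> y} \<le> card {y \<in> T'. a \<le> y}"
    and "card {y \<in> T'. a \<le> y} \<le> card {y \<in> T. a \<le> y} + (if a \<in> T then 0 else 1)"
    using card_ge_insert_succ[of D q a] by auto
qed

lemma image_eq_le_imp_eq:
  fixes g :: "'a \<Rightarrow> 'b::ordered_cancel_comm_monoid_add"
  assumes "finite A" "f ` A = A" "\<And>x. x \<in> A \<Longrightarrow> g x \<le> g (f x)" "x \<in> A"
  shows "g (f x) = g x"
proof -
  have "inj_on f A"
    using assms(1,2) by (simp add: eq_card_imp_inj_on)
  then have "sum (g \<circ> f) A = sum g A"
    using assms(2) sum.reindex[of f A g] by simp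
  then show ?thesis
    using sum_mono_inv[of g A "g \<circ> f" x] assms(1,3,4) by simp
qed

definition chip_sites :: "int set \<Rightarrow> (int \<Rightarrow> int) \<Rightarrow> int multiset" where
  "chip_sites L c = image_mset c (mset_set L)"

lemma chip_sites_cong: "(\<And>k. k \<in> L \<Longrightarrow> c k = c' k) \<Longrightarrow> chip_sites L c = chip_sites L c'"
  unfolding chip_sites_def by (cases "finite L") (auto intro: image_mset_cong)

lemma chip_sites_remove:
  "finite L \<Longrightarrow> k \<in> L \<Longrightarrow> chip_sites L c = add_mset (c k) (chip_sites (L - {k}) c)"
  unfolding chip_sites_def by (simp add: mset_set.remove)

lemma chip_sites_const: "finite L \<Longrightarrow> chip_sites L (\<lambda>_. z) = replicate_mset (card L) z"
  unfolding chip_sites_def by (simp add: image_mset_const_eq)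

lemma chip_sites_inj_on: "inj_on c L \<Longrightarrow> chip_sites L c = mset_set (c ` L)"
  unfolding chip_sites_def by (rule image_mset_mset_set)

lemma chip_sites_fire:
  assumes "finite L" "a \<in> L" "b \<in> L" "a \<noteq> b" "c a = z" "c b = z"
  defines "c' \<equiv> c(a := z - 1, b := z + 1)" and "N \<equiv> chip_sites (L - {a} - {b}) c"
  shows "chip_sites (L - {a}) c = add_mset z N" and "chip_sites (L - {b}) c = add_mset z N"
    and "chip_sites (L - {a}) c' = add_mset (z + 1) N" and "chip_sites (L - {b}) c' = add_mset (z - 1) N"
proof -
  have a: "finite (L - {b})" "a \<in> L - {b}" and b: "finite (L - {a})" "b \<in> L - {a}"
    using assms(1-4) by auto
  have swap: "L - {b} - {a} = L - {a} - {b}"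
    by blast
  have N': "chip_sites (L - {a} - {b}) c' = N"
    unfolding N_def c'_def by (rule chip_sites_cong) simp
  show "chip_sites (L - {a}) c = add_mset z N"
    using chip_sites_remove[OF b, of c] assms(6) unfolding N_def by simp
  show "chip_sites (L - {b}) c = add_mset z N"
    using chip_sites_remove[OF a, of c] assms(5) unfolding N_def swap by simp
  show "chip_sites (L - {a}) c' = add_mset (z + 1) N"
    using chip_sites_remove[OF b, of c'] N' unfolding c'_def by simp
  show "chip_sites (L - {b}) c' = add_mset (z - 1) N"
    using chip_sites_remove[OF a, of c'] N' assms(4) unfolding c'_def swap by simp
qed

lemma topples_chip_sites_fire:
  assumes "finite L" "a \<in> L" "b \<in> L" "a \<noteq> b" "c a = c b"
  shows "topples (chip_sites L c) (chip_sites L (c(a := c a - 1, b := c b + 1)))"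
proof -
  define z where "z = c a"
  define N where "N = chip_sites (L - {a} - {b}) c"
  have za: "c a = z" and zb: "c b = z"
    using assms(5) by (simp_all add: z_def)
  note sites = chip_sites_fire[OF assms(1-4) za zb, folded N_def]
  have "chip_sites L c = add_mset z (add_mset z N)"
    using chip_sites_remove[OF assms(1,2), of c] sites(1) za by simp
  moreover have "chip_sites L (c(a := c a - 1, b := c b + 1)) = add_mset (z - 1) (add_mset (z + 1) N)"
    using chip_sites_remove[OF assms(1,2), of "c(a := z - 1, b := z + 1)"] sites(3) assms(4) za zb
    by simp
  moreover have "topples (add_mset z (add_mset z N)) (add_mset (z - 1) (add_mset (z + 1) N))"
    unfolding topples_def topple_def by (intro exI[of _ z]) simp
  ultimately show ?thesis
    by simp
qed

lemma rtranclp_topples_chip_sites: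
  "(fire L)\<^sup>*\<^sup>* c c' \<Longrightarrow> finite L \<Longrightarrow> topples\<^sup>*\<^sup>* (chip_sites L c) (chip_sites L c')"
proof (induction rule: rtranclp_induct)
  case (step c' c'')
  from step.hyps(2) obtain a b where "a \<in> L" "b \<in> L" "a < b" "c' a = c' b"
    and c'': "c'' = c'(a := c' a - 1, b := c' b + 1)"
    by (cases rule: fire.cases) blast
  then have "topples (chip_sites L c') (chip_sites L c'')"
    unfolding c'' by (intro topples_chip_sites_fire[OF step.prems]) auto
  with step show ?case
    by simp
qed simp

lemma chips_eq: "chips m = {-int m..int m} - {0}"
  unfolding chips_def by auto

lemma finite_chips: "finite (chips m)"
  by (simp add: chips_eq)

lemma card_chips: "card (chips m) = 2 * m"
  by (simp add: chips_eq card_Diff_singleton)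

lemma uminus_chips: "uminus ` chips m = chips m"
proof
  have neg: "- k \<in> chips m" if "k \<in> chips m" for k
    using that by (auto simp: chips_def)
  then show "uminus ` chips m \<subseteq> chips m"
    by auto
  show "chips m \<subseteq> uminus ` chips m"
  proof
    fix k
    assume "k \<in> chips m"
    then show "k \<in> uminus ` chips m"
      using neg by (intro rev_image_eqI[of "- k"]) auto
  qed
qed

definition stable_sites_without :: "int set \<Rightarrow> (int \<Rightarrow> int) \<Rightarrow> int \<Rightarrow> int set" where
  "stable_sites_without L c k = set_mset (stabilization (chip_sites (L - {k}) c))"

lemma finite_stable_sites_without: "finite (stable_sites_without L c k)"
  by (simp add: stable_sites_without_def)

lemma stable_sites_without_fire:
  assumes "finite L" "a \<in> L" "b \<in> L" "a \<noteq> b" "c a = c b"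
  defines "c' \<equiv> c(a := c a - 1, b := c b + 1)"
  shows "stable_sites_without L c b = stable_sites_without L c a"
    and "shift_right (stable_sites_without L c a) (stable_sites_without L c' a)"
    and "shift_right (stable_sites_without L c' b) (stable_sites_without L c b)"
    and "k \<in> L \<Longrightarrow> k \<noteq> a \<Longrightarrow> k \<noteq> b \<Longrightarrow> stable_sites_without L c' k = stable_sites_without L c k"
proof -
  define z where "z = c a"
  define N where "N = chip_sites (L - {a} - {b}) c"
  have za: "c a = z" and zb: "c b = z" and c'z: "c' = c(a := z - 1, b := z + 1)"
    using assms(5) by (simp_all add: z_def c'_def)
  note sites = chip_sites_fire[OF assms(1-4) za zb, folded c'z N_def]
  show "stable_sites_without L c b = stable_sites_without L c a"
    using sites(1,2) by (simp add: stable_sites_without_def)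
  show "shift_right (stable_sites_without L c a) (stable_sites_without L c' a)"
    using shift_right_stabilization_add_mset[of z N] sites(1,3)
    by (simp add: stable_sites_without_def)
  show "shift_right (stable_sites_without L c' b) (stable_sites_without L c b)"
    using shift_right_stabilization_add_mset[of "z - 1" N] sites(2,4)
    by (simp add: stable_sites_without_def)
  assume k: "k \<in> L" "k \<noteq> a" "k \<noteq> b"
  have "topples (chip_sites (L - {k}) c) (chip_sites (L - {k}) c')"
    unfolding c'_def using assms(1-5) k by (intro topples_chip_sites_fire) auto
  then show "stable_sites_without L c' k = stable_sites_without L c k"
    unfolding stable_sites_without_def by (metis stabilization_rtranclp_topples r_into_rtranclp)
qed

lemma stable_sites_without_inj_on:
  assumes "inj_on c L" "c ` L = L" "k \<in> L" "finite L"
  shows "stable_sites_without L c k = L - {c k}"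
proof -
  have "inj_on c (L - {k})"
    using assms(1) by (rule inj_on_subset) auto
  then have "stabilization (chip_sites (L - {k}) c) = mset_set (c ` (L - {k}))"
    by (simp add: chip_sites_inj_on stabilization_stable stable_config_mset_set)
  also have "c ` (L - {k}) = L - {c k}"
    using assms(1-3) by (simp add: inj_on_image_set_diff)
  finally show ?thesis
    using assms(4) by (simp add: stable_sites_without_def)
qed

definition tail_bound :: "nat \<Rightarrow> (int \<Rightarrow> int) \<Rightarrow> bool" where
  "tail_bound m c \<longleftrightarrow>
    (\<forall>k \<in> chips m. 0 < k \<longrightarrow> int (card {y \<in> stable_sites_without (chips m) c k. k \<le> y}) \<le> int m - k)"

lemma tail_bound_initial: "tail_bound m (\<lambda>_. 0)"
  unfolding tail_bound_def
proof (intro ballI impI)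
  fix k
  assume k: "k \<in> chips m" "0 < k"
  then have "1 \<le> m" and "card (chips m - {k}) = 2 * (m - 1) + 1"
    using card_chips[of m] finite_chips[of m] by (auto simp: chips_def)
  then have "chip_sites (chips m - {k}) (\<lambda>_. 0) = replicate_mset (2 * (m - 1) + 1) 0"
    by (simp add: chip_sites_const finite_chips)
  then have "stable_sites_without (chips m) (\<lambda>_. 0) k = {-(int m - 1)..int m - 1}"
    using \<open>1 \<le> m\<close> unfolding stable_sites_without_def
    by (simp only: stabilization_zeros_odd) (simp add: of_nat_diff)
  moreover have "{y \<in> {-(int m - 1)..int m - 1}. k \<le> y} = {k..int m - 1}"
    using k by auto
  ultimately show "int (card {y \<in> stable_sites_without (chips m) (\<lambda>_. 0) k. k \<le> y})
      \<le> int m - k"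
    using k by (simp add: chips_def)
qed

lemma tail_bound_fire:
  assumes "fire (chips m) c c'" "tail_bound m c"
  shows "tail_bound m c'"
  unfolding tail_bound_def
proof (intro ballI impI)
  let ?T = "stable_sites_without (chips m)"
  fix k
  assume k: "k \<in> chips m" "0 < k"
  obtain a b where ab: "a \<in> chips m" "b \<in> chips m" "a < b" "c a = c b"
    and c': "c' = c(a := c a - 1, b := c b + 1)"
    using assms(1) by (cases rule: fire.cases) blast
  note sites = stable_sites_without_fire[OF finite_chips ab(1,2) less_imp_neq[OF ab(3)] ab(4), folded c']
  have bound: "int (card {y \<in> ?T c j. j \<le> y}) \<le> int m - j" if "j \<in> chips m" "0 < j" for j
    using assms(2) that unfolding tail_bound_def by blast
  consider "k = a" | "k = b" | "k \<noteq> a" "k \<noteq> b"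
    by blast
  then show "int (card {y \<in> ?T c' k. k \<le> y}) \<le> int m - k"
  proof cases
    case 1
    have "int (card {y \<in> ?T c' a. a \<le> y}) \<le> int (card {y \<in> ?T c a. a \<le> y}) + (if a \<in> ?T c a then 0 else 1)"
      using card_ge_shift_right(2)[OF finite_stable_sites_without sites(2), of a] by (simp split: if_splits)
    also have "\<dots> \<le> int (card {y \<in> ?T c a. b \<le> y}) + (b - a)"
      using card_ge_le_card_ge_add[OF finite_stable_sites_without ab(3)] by simp
    also have "\<dots> \<le> int m - a"
      using bound[OF ab(2)] sites(1) ab(3) k(2) 1 by simp
    finally show ?thesis
      using 1 by simp
  next
    case 2
    then show ?thesis
      using card_ge_shift_right(1)[OF finite_stable_sites_without sites(3), of b] bound[OF k]
      by (simp add: le_trans[OF of_nat_mono])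
  next
    case 3
    then show ?thesis
      using sites(4)[OF k(1)] bound[OF k] by simp
  qed
qed

lemma tail_bound_reachable: "(fire (chips m))\<^sup>*\<^sup>* (\<lambda>_. 0) c \<Longrightarrow> tail_bound m c"
proof (induction rule: rtranclp_induct)
  case base
  show ?case
    by (rule tail_bound_initial)
next
  case (step c c')
  show ?case
    by (rule tail_bound_fire[OF step.hyps(2) step.IH])
qed

lemma image_terminal:
  assumes "(fire (chips m))\<^sup>*\<^sup>* (\<lambda>_. 0) c" "terminal (chips m) c"
  shows "c ` chips m = chips m"
proof -
  have inj: "inj_on c (chips m)"
    using assms(2) by (simp add: terminal_def)
  have "chip_sites (chips m) (\<lambda>_. 0) = replicate_mset (2 * m) 0"
    by (simp add: chip_sites_const finite_chips card_chips)
  then have "mset_set (chips m) = stabilization (chip_sites (chips m) (\<lambda>_. 0))"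
    by (simp add: stabilization_zeros_even chips_eq)
  also have "\<dots> = chip_sites (chips m) c"
    using rtranclp_topples_chip_sites[OF assms(1) finite_chips]
    by (rule stabilization_eqI) (simp add: chip_sites_inj_on[OF inj] stable_config_mset_set)
  finally have "mset_set (chips m) = mset_set (c ` chips m)"
    by (simp add: chip_sites_inj_on[OF inj])
  then show ?thesis
    by (metis finite_chips finite_imageI finite_set_mset_mset_set)
qed

lemma terminal_ge:
  assumes "(fire (chips m))\<^sup>*\<^sup>* (\<lambda>_. 0) c" "terminal (chips m) c" "k \<in> chips m" "0 < k"
  shows "k \<le> c k"
proof (rule ccontr)
  assume "\<not> k \<le> c k"
  have "inj_on c (chips m)"
    using assms(2) by (simp add: terminal_def)
  then have "stable_sites_without (chips m) c k = chips m - {c k}"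
    using image_terminal[OF assms(1,2)] assms(3) finite_chips by (rule stable_sites_without_inj_on)
  moreover have "{y \<in> chips m - {c k}. k \<le> y} = {k..int m}"
    using \<open>\<not> k \<le> c k\<close> assms(4) unfolding chips_def by auto
  moreover have "int (card {y \<in> stable_sites_without (chips m) c k. k \<le> y}) \<le> int m - k"
    using tail_bound_reachable[OF assms(1)] assms(3,4) unfolding tail_bound_def by blast
  moreover have "k \<le> int m"
    using assms(3) by (simp add: chips_def)
  ultimately show False
    by simp
qed

lemma fire_mirror:
  assumes "fire L c c'"
  shows "fire (uminus ` L) (\<lambda>k. - c (- k)) (\<lambda>k. - c' (- k))"
proof -
  obtain a b where ab: "a \<in> L" "b \<in> L" "a < b" "c a = c b"
    and c': "c' = c(a := c a - 1, b := c b + 1)"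
    using assms by (cases rule: fire.cases) blast
  let ?d = "\<lambda>k. - c (- k)"
  have "fire (uminus ` L) ?d (?d(- b := ?d (- b) - 1, - a := ?d (- a) + 1))"
    using ab by (intro fire.intros) auto
  moreover have "?d(- b := ?d (- b) - 1, - a := ?d (- a) + 1) = (\<lambda>k. - c' (- k))"
    using ab(3) unfolding c' by (auto simp: fun_eq_iff)
  ultimately show ?thesis
    by simp
qed

lemma rtranclp_fire_mirror:
  "(fire L)\<^sup>*\<^sup>* c d \<Longrightarrow> (fire (uminus ` L))\<^sup>*\<^sup>* (\<lambda>k. - c (- k)) (\<lambda>k. - d (- k))"
proof (induction rule: rtranclp_induct)
  case (step d d')
  with fire_mirror show ?case
    by (blast intro: rtranclp.rtrancl_into_rtrancl)
qed simp

lemma terminal_mirror: "terminal (chips m) c \<Longrightarrow> terminal (chips m) (\<lambda>k. - c (- k))"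
  unfolding terminal_def inj_on_def by (metis minus_minus neg_equal_iff_equal image_eqI uminus_chips)

lemma terminal_le:
  assumes "(fire (chips m))\<^sup>*\<^sup>* (\<lambda>_. 0) c" "terminal (chips m) c" "k \<in> chips m" "k < 0"
  shows "c k \<le> k"
proof -
  have "(fire (chips m))\<^sup>*\<^sup>* (\<lambda>_. 0) (\<lambda>k. - c (- k))"
    using rtranclp_fire_mirror[OF assms(1)] by (simp add: uminus_chips)
  moreover have "- k \<in> chips m"
    using assms(3) uminus_chips by force
  ultimately show ?thesis
    using terminal_ge[OF _ terminal_mirror[OF assms(2)], of "- k"] assms(4) by simp
qed

theorem theorem2p10:
  fixes m :: nat and c :: "int \<Rightarrow> int"
  assumes "m \<ge> 1"
    and "(fire (chips m))\<^sup>*\<^sup>* (\<lambda>_. 0) c"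
    and "terminal (chips m) c"
  shows "\<forall>k \<in> chips m. c k = k"
proof
  fix k
  assume k: "k \<in> chips m"
  note right = terminal_ge[OF assms(2,3)] and left = terminal_le[OF assms(2,3)]
  have "\<bar>j\<bar> \<le> \<bar>c j\<bar>" if "j \<in> chips m" for j
    using right[OF that] left[OF that] that by (cases "0 < j") (auto simp: chips_def)
  then have "\<bar>c k\<bar> = \<bar>k\<bar>"
    using image_eq_le_imp_eq[OF finite_chips image_terminal[OF assms(2,3)], of abs k] k by blast
  then show "c k = k"
    using right[OF k] left[OF k] k by (cases "0 < k") (auto simp: chips_def)
qed

end
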